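(* Let $G$ be an amenable (discrete) group, let $(X,u)$ and $(Y,v)$ be $G$-spaces, and assume $X$ is $G$-complemented in its bidual. Then every $G$-centralizer $\Omega:Y\curvearrowright X$ is at bounded distance from a $G$-equivariant quasi-linear map $\omega:Y_{00}\to X_\infty$ (defined on the same $Y_{00}$, with values in the same $X_\infty$). If moreover $\Omega$ is linear, then $\omega$ can be chosen linear.
   Context: Let $G$ be a semigroup. A $G$-space is a Banach space $X$ with a bounded action $g\mapsto u(g)\in\mathcal L(X)$ ($u(gh)=u(g)u(h)$, $\sup_g\|u(g)\|<\infty$). A linear map $T$ between $G$-spaces $(X,u)$, $(Y,v)$ is $G$-equivariant if $Tu(g)=v(g)T$ for all $g$. A quasi-linear map $\Omega:Y\curvearrowright X$ between $G$-spaces $(Y,v)$ and $(X,u)$ is a homogeneous map $\Omega:Y_{00}\to X_\infty$, where $Y_{00}\subseteq Y$ is a dense linear subspace with $v(g)Y_{00}\subseteq Y_{00}$ for all $g$, and $X_\infty\supseteq X$ is a vector space to which the action $u$ extends as an action by linear maps (still written $u(g)$), such that for some $C$ and all $y,y'\in Y_{00}$: $\Omega(y+y')-\Omega y-\Omega y'\in X$ and $\|\Omega(y+y')-\Omega y-\Omega y'\|_X\le C(\|y\|_Y+\|y'\|_Y)$. $\Omega$ is a $G$-centralizer if there is $C$ with $u(g)\Omega y-\Omega v(g)y\in X$ and $\|u(g)\Omega y-\Omega v(g)y\|_X\le C\|y\|_Y$ for all $g\in G$, $y\in Y_{00}$; it is $G$-equivariant if $u(g)\Omega y=\Omega v(g)y$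 for all $g\in G$, $y\in Y_{00}$. Two maps $\Omega_1,\Omega_2:Y_{00}\to X_\infty$ are at bounded distance (boundedly equivalent) if $\Omega_1y-\Omega_2y\in X$ and $\|\Omega_1y-\Omega_2y\|_X\le C\|y\|_Y$ for all $y\in Y_{00}$. A $G$-space $(X,u)$ is $G$-complemented in its bidual if there is a bounded linear projection $P$ of $X^{**}$ onto (the canonical copy of) $X$ with $Pu(g)^{**}=u(g)P$ for all $g\in G$. *)

theory Defs
  imports "HOL-Analysis.Analysis" "HOL-Algebra.Group"
begin

definition left_invariant_mean :: "('g, 'b) monoid_scheme \<Rightarrow> (('g \<Rightarrow> real) \<Rightarrow> real) \<Rightarrow> bool" where
  "left_invariant_mean G m \<longleftrightarrow>
     (\<forall>f f' a b. bounded (f ` carrier G) \<longrightarrow> bounded (f' ` carrier G) \<longrightarrow>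
        m (\<lambda>x. a * f x + b * f' x) = a * m f + b * m f') \<and>
     (\<forall>f f'. bounded (f ` carrier G) \<longrightarrow> (\<forall>x\<in>carrier G. f x = f' x) \<longrightarrow> m f = m f') \<and>
     (\<forall>f. bounded (f ` carrier G) \<longrightarrow> (\<forall>x\<in>carrier G. 0 \<le> f x) \<longrightarrow> 0 \<le> m f) \<and>
     m (\<lambda>_. 1) = 1 \<and>
     (\<forall>f. \<forall>g\<in>carrier G. bounded (f ` carrier G) \<longrightarrow> m (\<lambda>x. f (g \<otimes>\<^bsub>G\<^esub> x)) = m f)"

definition amenable :: "('g, 'b) monoid_scheme \<Rightarrow> bool" where
  "amenable G \<longleftrightarrow> group G \<and> (\<exists>m. left_invariant_mean G m)"

definition G_space :: "('g, 'b) monoid_scheme \<Rightarrow> ('g \<Rightarrow> ('x::real_normed_vector \<Rightarrow>\<^sub>L 'x)) \<Rightarrow> bool" where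
  "G_space G u \<longleftrightarrow>
     (\<forall>g\<in>carrier G. \<forall>h\<in>carrier G. u (g \<otimes>\<^bsub>G\<^esub> h) = u g o\<^sub>L u h) \<and>
     (\<exists>K. \<forall>g\<in>carrier G. norm (u g) \<le> K)"

definition dual_map :: "('a::real_normed_vector \<Rightarrow>\<^sub>L 'b::real_normed_vector) \<Rightarrow> (('b \<Rightarrow>\<^sub>L real) \<Rightarrow>\<^sub>L ('a \<Rightarrow>\<^sub>L real))" where
  "dual_map T = Blinfun (\<lambda>f. f o\<^sub>L T)"

definition bidual_embed :: "'a::real_normed_vector \<Rightarrow> (('a \<Rightarrow>\<^sub>L real) \<Rightarrow>\<^sub>L real)" where
  "bidual_embed x = Blinfun (\<lambda>f. blinfun_apply f x)"

text \<open>X is G-complemented in its bidual: a bounded projection P of X** onto (the canonical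
  copy of) X, written as a bounded map X** \<rightarrow> X restricting to the identity on X,
  with P u(g)** = u(g) P.\<close>
definition G_complemented_in_bidual :: "('g, 'b) monoid_scheme \<Rightarrow> ('g \<Rightarrow> ('x::real_normed_vector \<Rightarrow>\<^sub>L 'x)) \<Rightarrow> bool" where
  "G_complemented_in_bidual G u \<longleftrightarrow>
     (\<exists>P :: ((('x \<Rightarrow>\<^sub>L real) \<Rightarrow>\<^sub>L real) \<Rightarrow>\<^sub>L 'x).
        (\<forall>x. blinfun_apply P (bidual_embed x) = x) \<and>
        (\<forall>g\<in>carrier G. P o\<^sub>L dual_map (dual_map (u g)) = u g o\<^sub>L P))"

text \<open>X_\<infinity>: a real vector space 'z containing X via the injective linear map \<iota>,
  with an action U by linear maps extending u.\<close>
definition extended_action ::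
  "('g, 'b) monoid_scheme \<Rightarrow> ('g \<Rightarrow> ('x::real_normed_vector \<Rightarrow>\<^sub>L 'x)) \<Rightarrow> ('x \<Rightarrow> 'z::real_vector) \<Rightarrow> ('g \<Rightarrow> 'z \<Rightarrow> 'z) \<Rightarrow> bool" where
  "extended_action G u \<iota> U \<longleftrightarrow>
     linear \<iota> \<and> inj \<iota> \<and>
     (\<forall>g\<in>carrier G. linear (U g)) \<and>
     (\<forall>g\<in>carrier G. \<forall>h\<in>carrier G. U (g \<otimes>\<^bsub>G\<^esub> h) = U g \<circ> U h) \<and>
     (\<forall>g\<in>carrier G. \<forall>x. U g (\<iota> x) = \<iota> (u g x))"

definition admissible_domain :: "('g, 'b) monoid_scheme \<Rightarrow> ('g \<Rightarrow> ('y::real_normed_vector \<Rightarrow>\<^sub>L 'y)) \<Rightarrow> 'y set \<Rightarrow> bool" where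
  "admissible_domain G v Y00 \<longleftrightarrow>
     subspace Y00 \<and> closure Y00 = UNIV \<and> (\<forall>g\<in>carrier G. \<forall>y\<in>Y00. v g y \<in> Y00)"

definition in_X_le :: "('x::real_normed_vector \<Rightarrow> 'z) \<Rightarrow> 'z \<Rightarrow> real \<Rightarrow> bool" where
  "in_X_le \<iota> z c \<longleftrightarrow> (\<exists>x. \<iota> x = z \<and> norm x \<le> c)"

definition homogeneous_on :: "'y::real_vector set \<Rightarrow> ('y \<Rightarrow> 'z::real_vector) \<Rightarrow> bool" where
  "homogeneous_on Y00 \<Omega> \<longleftrightarrow> (\<forall>r. \<forall>y\<in>Y00. \<Omega> (r *\<^sub>R y) = r *\<^sub>R \<Omega> y)"

definition linear_on :: "'y::real_vector set \<Rightarrow> ('y \<Rightarrow> 'z::real_vector) \<Rightarrow> bool" where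
  "linear_on Y00 \<Omega> \<longleftrightarrow> (\<forall>a b. \<forall>y\<in>Y00. \<forall>y'\<in>Y00. \<Omega> (a *\<^sub>R y + b *\<^sub>R y') = a *\<^sub>R \<Omega> y + b *\<^sub>R \<Omega> y')"

definition quasi_linear ::
  "('x::real_normed_vector \<Rightarrow> 'z::real_vector) \<Rightarrow> 'y::real_normed_vector set \<Rightarrow> ('y \<Rightarrow> 'z) \<Rightarrow> bool" where
  "quasi_linear \<iota> Y00 \<Omega> \<longleftrightarrow>
     homogeneous_on Y00 \<Omega> \<and>
     (\<exists>C. \<forall>y\<in>Y00. \<forall>y'\<in>Y00. in_X_le \<iota> (\<Omega> (y + y') - \<Omega> y - \<Omega> y') (C * (norm y + norm y')))"

definition G_centralizer ::
  "('g, 'b) monoid_scheme \<Rightarrow> ('x::real_normed_vector \<Rightarrow> 'z::real_vector) \<Rightarrow> ('g \<Rightarrow> 'z \<Rightarrow> 'z) \<Rightarrow>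
   ('g \<Rightarrow> ('y::real_normed_vector \<Rightarrow>\<^sub>L 'y)) \<Rightarrow> 'y set \<Rightarrow> ('y \<Rightarrow> 'z) \<Rightarrow> bool" where
  "G_centralizer G \<iota> U v Y00 \<Omega> \<longleftrightarrow>
     (\<exists>C. \<forall>g\<in>carrier G. \<forall>y\<in>Y00. in_X_le \<iota> (U g (\<Omega> y) - \<Omega> (v g y)) (C * norm y))"

definition G_equivariant_map ::
  "('g, 'b) monoid_scheme \<Rightarrow> ('g \<Rightarrow> 'z \<Rightarrow> 'z) \<Rightarrow> ('g \<Rightarrow> ('y::real_normed_vector \<Rightarrow>\<^sub>L 'y)) \<Rightarrow> 'y set \<Rightarrow> ('y \<Rightarrow> 'z) \<Rightarrow> bool" where
  "G_equivariant_map G U v Y00 \<Omega> \<longleftrightarrow> (\<forall>g\<in>carrier G. \<forall>y\<in>Y00. U g (\<Omega> y) = \<Omega> (v g y))"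

definition bounded_distance ::
  "('x::real_normed_vector \<Rightarrow> 'z::real_vector) \<Rightarrow> 'y::real_normed_vector set \<Rightarrow> ('y \<Rightarrow> 'z) \<Rightarrow> ('y \<Rightarrow> 'z) \<Rightarrow> bool" where
  "bounded_distance \<iota> Y00 \<Omega>1 \<Omega>2 \<longleftrightarrow> (\<exists>C. \<forall>y\<in>Y00. in_X_le \<iota> (\<Omega>1 y - \<Omega>2 y) (C * norm y))"

end

theory Submission
  imports Defs
begin

text \<open>Because \<open>\<Omega>\<close> is a centralizer, for each \<open>y\<close> the differences
  \<open>U g (\<Omega> (v (inv g) y)) - \<Omega> y\<close> form a bounded \<open>X\<close>-valued family indexed by \<open>G\<close>.
  An invariant mean turns this family into an element of the bidual of \<open>X\<close>, and the equivariant
  projection \<open>P\<close> brings it back into \<open>X\<close>. Adding it to \<open>\<Omega>\<close> changes \<open>\<Omega>\<close> only by a bounded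
  amount, and the invariance of the mean makes the result equivariant; linearity of the mean
  carries linearity of \<open>\<Omega>\<close> over to the new map.\<close>

lemma dual_map_apply: "blinfun_apply (dual_map T) f = f o\<^sub>L T"
  unfolding dual_map_def
  by (simp add: bounded_linear_Blinfun_apply
      bounded_bilinear.bounded_linear_left[OF bounded_bilinear_blinfun_compose])

lemma bidual_embed_apply: "blinfun_apply (bidual_embed x) f = f x"
  unfolding bidual_embed_def
  by (simp add: bounded_linear_Blinfun_apply blinfun.bounded_linear_left)

subsection \<open>Invariant means\<close>

context
  fixes G :: "('g, 'b) monoid_scheme" and m :: "('g \<Rightarrow> real) \<Rightarrow> real"
  assumes mean: "left_invariant_mean G m"
begin

lemma mean_lincomb:
  "bounded (f ` carrier G) \<Longrightarrow> bounded (f' ` carrier G) \<Longrightarrow> m (\<lambda>x. a * f x + b * f' x) = a * m f + b * m f'"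
  using mean unfolding left_invariant_mean_def by blast

lemma mean_cong: "bounded (f ` carrier G) \<Longrightarrow> (\<And>x. x \<in> carrier G \<Longrightarrow> f x = f' x) \<Longrightarrow> m f = m f'"
  using mean unfolding left_invariant_mean_def by blast

lemma mean_nonneg: "bounded (f ` carrier G) \<Longrightarrow> (\<And>x. x \<in> carrier G \<Longrightarrow> 0 \<le> f x) \<Longrightarrow> 0 \<le> m f"
  using mean unfolding left_invariant_mean_def by blast

lemma mean_const_one: "m (\<lambda>_. 1) = 1"
  using mean unfolding left_invariant_mean_def by blast

lemma mean_translate: "g \<in> carrier G \<Longrightarrow> bounded (f ` carrier G) \<Longrightarrow> m (\<lambda>x. f (g \<otimes>\<^bsub>G\<^esub> x)) = m f"
  using mean unfolding left_invariant_mean_def by blast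

lemma mean_affine:
  assumes "bounded (f ` carrier G)"
  shows "m (\<lambda>x. a * f x + c) = a * m f + c"
proof -
  have "bounded ((\<lambda>_. 1::real) ` carrier G)"
    by (rule bounded_subset[of "{1}"]) auto
  then show ?thesis
    using mean_lincomb[OF assms, of "\<lambda>_. 1" a c] mean_const_one by simp
qed

lemma mean_abs_le:
  assumes B: "\<And>x. x \<in> carrier G \<Longrightarrow> \<bar>f x\<bar> \<le> B"
  shows "\<bar>m f\<bar> \<le> B"
proof -
  have f: "bounded (f ` carrier G)"
    unfolding bounded_iff using B by auto
  have affine: "bounded ((\<lambda>x. a * f x + B) ` carrier G)" for a
    using bounded_translation[OF bounded_scaleR_comp[OF f, of a], of B] by (simp add: image_image add.commute)
  have "0 \<le> m (\<lambda>x. a * f x + B)" if "a = 1 \<or> a = -1" for a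
    by (rule mean_nonneg[OF affine]) (use B that in \<open>force simp: abs_le_iff\<close>)
  from this[of 1] this[of "-1"] show ?thesis
    unfolding mean_affine[OF f] by linarith
qed

end

subsection \<open>Weak-star means of bounded families\<close>

definition weak_star_mean ::
  "(('g \<Rightarrow> real) \<Rightarrow> real) \<Rightarrow> ('g \<Rightarrow> 'x::real_normed_vector) \<Rightarrow> ('x \<Rightarrow>\<^sub>L real) \<Rightarrow>\<^sub>L real" where
  "weak_star_mean m f = Blinfun (\<lambda>\<phi>. m (\<lambda>g. blinfun_apply \<phi> (f g)))"

lemma bounded_blinfun_comp: "bounded (f ` A) \<Longrightarrow> bounded ((\<lambda>x. blinfun_apply T (f x)) ` A)"
  using bounded_linear_image[of "f ` A" "blinfun_apply T"]
  by (simp add: image_image blinfun.bounded_linear_right)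

context
  fixes G :: "('g, 'b) monoid_scheme" and m :: "('g \<Rightarrow> real) \<Rightarrow> real"
  assumes mean: "left_invariant_mean G m"
begin

lemma weak_star_mean_apply:
  assumes f: "bounded (f ` carrier G)"
  shows "blinfun_apply (weak_star_mean m f) \<phi> = m (\<lambda>g. blinfun_apply \<phi> (f g))"
proof -
  obtain B where B: "\<And>g. g \<in> carrier G \<Longrightarrow> norm (f g) \<le> B"
    using f unfolding bounded_iff by auto
  have "bounded_linear (\<lambda>\<phi>. m (\<lambda>g. blinfun_apply \<phi> (f g)))"
  proof (rule bounded_linear_intro[where K = B])
    show "m (\<lambda>g. blinfun_apply (\<phi> + \<psi>) (f g))
        = m (\<lambda>g. blinfun_apply \<phi> (f g)) + m (\<lambda>g. blinfun_apply \<psi> (f g))" for \<phi> \<psi>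
      using mean_lincomb[OF mean bounded_blinfun_comp[OF f, of \<phi>] bounded_blinfun_comp[OF f, of \<psi>],
          where a=1 and b=1]
      by (simp add: plus_blinfun.rep_eq)
    show "m (\<lambda>g. blinfun_apply (r *\<^sub>R \<phi>) (f g)) = r *\<^sub>R m (\<lambda>g. blinfun_apply \<phi> (f g))" for r \<phi>
      using mean_lincomb[OF mean bounded_blinfun_comp[OF f, of \<phi>] bounded_blinfun_comp[OF f, of \<phi>],
          where a=r and b=0]
      by (simp add: scaleR_blinfun.rep_eq)
    show "norm (m (\<lambda>g. blinfun_apply \<phi> (f g))) \<le> norm \<phi> * B" for \<phi>
      unfolding real_norm_def
    proof (rule mean_abs_le[OF mean])
      fix g assume "g \<in> carrier G"
      then show "\<bar>blinfun_apply \<phi> (f g)\<bar> \<le> norm \<phi> * B"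
        using norm_blinfun[of \<phi> "f g"] mult_left_mono[OF B[OF \<open>g \<in> carrier G\<close>] norm_ge_zero[of \<phi>]]
        by simp
    qed
  qed
  then show ?thesis
    unfolding weak_star_mean_def by (simp add: bounded_linear_Blinfun_apply)
qed

lemma norm_weak_star_mean_le:
  assumes B: "\<And>g. g \<in> carrier G \<Longrightarrow> norm (f g) \<le> B" and "0 \<le> B"
  shows "norm (weak_star_mean m f) \<le> B"
proof (rule norm_blinfun_bound[OF \<open>0 \<le> B\<close>])
  have f: "bounded (f ` carrier G)"
    unfolding bounded_iff using B by auto
  fix \<phi> :: "'a \<Rightarrow>\<^sub>L real"
  have "\<bar>m (\<lambda>g. blinfun_apply \<phi> (f g))\<bar> \<le> B * norm \<phi>"
  proof (rule mean_abs_le[OF mean])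
    fix g assume "g \<in> carrier G"
    then show "\<bar>blinfun_apply \<phi> (f g)\<bar> \<le> B * norm \<phi>"
      using norm_blinfun[of \<phi> "f g"] mult_left_mono[OF B[OF \<open>g \<in> carrier G\<close>] norm_ge_zero[of \<phi>]]
      by (auto simp: mult.commute intro: order_trans)
  qed
  then show "norm (blinfun_apply (weak_star_mean m f) \<phi>) \<le> B * norm \<phi>"
    by (simp add: weak_star_mean_apply[OF f])
qed

lemma weak_star_mean_lincomb:
  assumes f: "bounded (f ` carrier G)" and f': "bounded (f' ` carrier G)"
  shows "weak_star_mean m (\<lambda>g. a *\<^sub>R f g + b *\<^sub>R f' g) = a *\<^sub>R weak_star_mean m f + b *\<^sub>R weak_star_mean m f'"
proof (rule blinfun_eqI)
  have "bounded ((\<lambda>g. a *\<^sub>R f g + b *\<^sub>R f' g) ` carrier G)"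
    by (intro bounded_plus_comp bounded_scaleR_comp f f')
  then show "blinfun_apply (weak_star_mean m (\<lambda>g. a *\<^sub>R f g + b *\<^sub>R f' g)) \<phi>
      = blinfun_apply (a *\<^sub>R weak_star_mean m f + b *\<^sub>R weak_star_mean m f') \<phi>" for \<phi>
    using mean_lincomb[OF mean bounded_blinfun_comp[OF f, of \<phi>] bounded_blinfun_comp[OF f', of \<phi>],
        where a=a and b=b]
    by (simp add: weak_star_mean_apply f f' blinfun.add_right blinfun.scaleR_right
        plus_blinfun.rep_eq scaleR_blinfun.rep_eq)
qed

lemma weak_star_mean_cong:
  assumes f: "bounded (f ` carrier G)" and eq: "\<And>g. g \<in> carrier G \<Longrightarrow> f g = f' g"
  shows "weak_star_mean m f = weak_star_mean m f'"
  unfolding weak_star_mean_def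
  by (rule arg_cong[where f = Blinfun], rule ext, rule mean_cong[OF mean bounded_blinfun_comp[OF f]])
    (simp add: eq)

lemma weak_star_mean_translate:
  assumes h: "h \<in> carrier G" and f: "bounded (f ` carrier G)"
  shows "weak_star_mean m (\<lambda>g. f (h \<otimes>\<^bsub>G\<^esub> g)) = weak_star_mean m f"
  unfolding weak_star_mean_def
  using mean_translate[OF mean h bounded_blinfun_comp[OF f]] by simp

lemma weak_star_mean_blinfun:
  assumes f: "bounded (f ` carrier G)"
  shows "weak_star_mean m (\<lambda>g. blinfun_apply T (f g)) = dual_map (dual_map T) (weak_star_mean m f)"
proof (rule blinfun_eqI)
  fix \<phi>
  show "blinfun_apply (weak_star_mean m (\<lambda>g. blinfun_apply T (f g))) \<phi>
      = blinfun_apply (dual_map (dual_map T) (weak_star_mean m f)) \<phi>"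
    using weak_star_mean_apply[OF bounded_blinfun_comp[OF f]] weak_star_mean_apply[OF f]
    by (simp add: dual_map_apply)
qed

lemma weak_star_mean_affine:
  assumes f: "bounded (f ` carrier G)"
  shows "weak_star_mean m (\<lambda>g. blinfun_apply T (f g) + c)
    = dual_map (dual_map T) (weak_star_mean m f) + bidual_embed c"
proof (rule blinfun_eqI)
  have Tf: "bounded ((\<lambda>g. blinfun_apply T (f g)) ` carrier G)"
    by (rule bounded_blinfun_comp[OF f])
  then have "bounded ((\<lambda>g. blinfun_apply T (f g) + c) ` carrier G)"
    using bounded_translation[OF Tf, of c] by (simp add: image_image add.commute)
  moreover have "m (\<lambda>g. blinfun_apply \<phi> (blinfun_apply T (f g)) + blinfun_apply \<phi> c)
      = m (\<lambda>g. blinfun_apply \<phi> (blinfun_apply T (f g))) + blinfun_apply \<phi> c" for \<phi>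
    using mean_affine[OF mean bounded_blinfun_comp[OF Tf, of \<phi>], where a=1 and c="blinfun_apply \<phi> c"]
    by simp
  ultimately show "blinfun_apply (weak_star_mean m (\<lambda>g. blinfun_apply T (f g) + c)) \<phi>
      = blinfun_apply (dual_map (dual_map T) (weak_star_mean m f) + bidual_embed c) \<phi>" for \<phi>
    by (simp add: weak_star_mean_blinfun[OF f, symmetric] weak_star_mean_apply Tf
        blinfun.add_right plus_blinfun.rep_eq bidual_embed_apply)
qed

end

subsection \<open>Bounded elements of the extension\<close>

lemma in_X_le_mono: "in_X_le \<iota> z c \<Longrightarrow> c \<le> c' \<Longrightarrow> in_X_le \<iota> z c'"
  unfolding in_X_le_def by force

lemma in_X_le_abs_const: "in_X_le \<iota> z (C * r) \<Longrightarrow> 0 \<le> r \<Longrightarrow> in_X_le \<iota> z (\<bar>C\<bar> * r)"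
  by (erule in_X_le_mono) (simp add: mult_right_mono)

lemma in_X_le_uminus: "linear \<iota> \<Longrightarrow> in_X_le \<iota> z c \<Longrightarrow> in_X_le \<iota> (- z) c"
  unfolding in_X_le_def by (metis linear_neg norm_minus_cancel)

lemma in_X_le_add:
  assumes "linear \<iota>" and "in_X_le \<iota> z c" and "in_X_le \<iota> z' c'"
  shows "in_X_le \<iota> (z + z') (c + c')"
proof -
  obtain x x' where "\<iota> x = z" "norm x \<le> c" "\<iota> x' = z'" "norm x' \<le> c'"
    using assms(2,3) unfolding in_X_le_def by blast
  then show ?thesis
    unfolding in_X_le_def using assms(1)
    by (intro exI[of _ "x + x'"]) (auto simp: linear_add intro: norm_triangle_le add_mono)
qed

lemma in_X_le_diff:
  assumes "linear \<iota>" and "in_X_le \<iota> z c" and "in_X_le \<iota> z' c'"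
  shows "in_X_le \<iota> (z - z') (c + c')"
proof -
  obtain x x' where "\<iota> x = z" "norm x \<le> c" "\<iota> x' = z'" "norm x' \<le> c'"
    using assms(2,3) unfolding in_X_le_def by blast
  then show ?thesis
    unfolding in_X_le_def using assms(1)
    by (intro exI[of _ "x - x'"]) (auto simp: linear_diff intro: norm_triangle_le_diff add_mono)
qed

lemma in_X_le_map:
  assumes "\<And>x. T (\<iota> x) = \<iota> (blinfun_apply S x)" and "norm S \<le> K" and "in_X_le \<iota> z c"
  shows "in_X_le \<iota> (T z) (K * c)"
proof -
  obtain x where x: "\<iota> x = z" "norm x \<le> c"
    using assms(3) unfolding in_X_le_def by blast
  have "norm (S x) \<le> K * c"
    using norm_blinfun[of S x] mult_mono[OF assms(2) x(2)] norm_ge_zero[of S] assms(2)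
    by (meson norm_ge_zero order_trans)
  then show ?thesis
    unfolding in_X_le_def using assms(1) x(1) by auto
qed

lemma in_X_le_inv_into:
  assumes "inj \<iota>" and "in_X_le \<iota> z c"
  shows "\<iota> (inv_into UNIV \<iota> z) = z" and "norm (inv_into UNIV \<iota> z) \<le> c"
  using assms unfolding in_X_le_def by auto

lemma bounded_distance_quasi_linear:
  assumes \<iota>: "linear \<iota>" and Y00: "subspace Y00" and hom: "homogeneous_on Y00 \<omega>"
    and quasi: "quasi_linear \<iota> Y00 \<Omega>" and dist: "bounded_distance \<iota> Y00 \<Omega> \<omega>"
  shows "quasi_linear \<iota> Y00 \<omega>"
proof -
  obtain C0 where C0: "\<And>y y'. y \<in> Y00 \<Longrightarrow> y' \<in> Y00 \<Longrightarrow>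
      in_X_le \<iota> (\<Omega> (y + y') - \<Omega> y - \<Omega> y') (C0 * (norm y + norm y'))"
    using quasi unfolding quasi_linear_def by blast
  obtain C1 where "\<And>y. y \<in> Y00 \<Longrightarrow> in_X_le \<iota> (\<Omega> y - \<omega> y) (C1 * norm y)"
    using dist unfolding bounded_distance_def by blast
  then have C1: "\<And>y. y \<in> Y00 \<Longrightarrow> in_X_le \<iota> (\<Omega> y - \<omega> y) (\<bar>C1\<bar> * norm y)"
    by (simp add: in_X_le_abs_const)
  have "in_X_le \<iota> (\<omega> (y + y') - \<omega> y - \<omega> y') ((C0 + 2 * \<bar>C1\<bar>) * (norm y + norm y'))"
    if y: "y \<in> Y00" "y' \<in> Y00" for y y'
  proof -
    have "\<omega> (y + y') - \<omega> y - \<omega> y'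
        = (\<Omega> (y + y') - \<Omega> y - \<Omega> y') - (\<Omega> (y + y') - \<omega> (y + y')) + (\<Omega> y - \<omega> y) + (\<Omega> y' - \<omega> y')"
      by (simp add: algebra_simps)
    moreover have "in_X_le \<iota> \<dots> (C0 * (norm y + norm y') + \<bar>C1\<bar> * norm (y + y') + \<bar>C1\<bar> * norm y + \<bar>C1\<bar> * norm y')"
      using y subspace_add[OF Y00 y]
      by (intro in_X_le_add[OF \<iota>] in_X_le_diff[OF \<iota>] C0 C1) simp_all
    moreover have "\<bar>C1\<bar> * norm (y + y') \<le> \<bar>C1\<bar> * (norm y + norm y')"
      by (simp add: mult_left_mono norm_triangle_ineq)
    then have "C0 * (norm y + norm y') + \<bar>C1\<bar> * norm (y + y') + \<bar>C1\<bar> * norm y + \<bar>C1\<bar> * norm y'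
        \<le> (C0 + 2 * \<bar>C1\<bar>) * (norm y + norm y')"
      by (simp add: algebra_simps)
    ultimately show ?thesis
      by (metis in_X_le_mono)
  qed
  then show ?thesis
    using hom unfolding quasi_linear_def by blast
qed

subsection \<open>Averaging a centralizer over an amenable group\<close>

locale amenable_averaging = group G
  for G :: "('g, 'b) monoid_scheme" (structure) +
  fixes m :: "('g \<Rightarrow> real) \<Rightarrow> real"
    and u :: "'g \<Rightarrow> ('x::real_normed_vector \<Rightarrow>\<^sub>L 'x)"
    and v :: "'g \<Rightarrow> ('y::real_normed_vector \<Rightarrow>\<^sub>L 'y)"
    and \<iota> :: "'x \<Rightarrow> 'z::real_vector"
    and U :: "'g \<Rightarrow> 'z \<Rightarrow> 'z"
    and Y00 :: "'y set"
    and \<Omega> :: "'y \<Rightarrow> 'z"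
    and P :: "(('x \<Rightarrow>\<^sub>L real) \<Rightarrow>\<^sub>L real) \<Rightarrow>\<^sub>L 'x"
  assumes mean: "left_invariant_mean G m"
    and u_space: "G_space G u" and v_space: "G_space G v"
    and P_bidual_embed: "\<And>x. P (bidual_embed x) = x"
    and P_equivariant: "\<And>g. g \<in> carrier G \<Longrightarrow> P o\<^sub>L dual_map (dual_map (u g)) = u g o\<^sub>L P"
    and extended: "extended_action G u \<iota> U"
    and Y00_subspace: "subspace Y00"
    and Y00_invariant: "\<And>g y. g \<in> carrier G \<Longrightarrow> y \<in> Y00 \<Longrightarrow> v g y \<in> Y00"
    and quasi: "quasi_linear \<iota> Y00 \<Omega>"
    and centralizer: "G_centralizer G \<iota> U v Y00 \<Omega>"
begin

lemma \<iota>_linear: "linear \<iota>" and \<iota>_inj: "inj \<iota>"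
  using extended unfolding extended_action_def by blast+

lemma U_linear: "g \<in> carrier G \<Longrightarrow> linear (U g)"
  using extended unfolding extended_action_def by blast

lemma U_mult: "g \<in> carrier G \<Longrightarrow> h \<in> carrier G \<Longrightarrow> U (g \<otimes> h) z = U g (U h z)"
  using extended unfolding extended_action_def by simp

lemma U_embed: "g \<in> carrier G \<Longrightarrow> U g (\<iota> x) = \<iota> (u g x)"
  using extended unfolding extended_action_def by blast

lemma v_mult: "g \<in> carrier G \<Longrightarrow> h \<in> carrier G \<Longrightarrow> v (g \<otimes> h) y = v g (v h y)"
  using v_space unfolding G_space_def by simp

lemma U_one_left: "g \<in> carrier G \<Longrightarrow> U \<one> (U g z) = U g z"
  using U_mult[of \<one> g] by simp

lemma U_one_right: "g \<in> carrier G \<Longrightarrow> U g (U \<one> z) = U g z"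
  using U_mult[of g \<one>] by simp

lemma v_one_left: "g \<in> carrier G \<Longrightarrow> v \<one> (v g y) = v g y"
  using v_mult[of \<one> g] by simp

lemma \<Omega>_zero: "\<Omega> 0 = 0"
proof -
  have "\<Omega> (0 *\<^sub>R 0) = 0 *\<^sub>R \<Omega> 0"
    using quasi subspace_0[OF Y00_subspace] unfolding quasi_linear_def homogeneous_on_def by blast
  then show ?thesis by simp
qed

lemma norm_u_bound:
  obtains K where "0 \<le> K" and "\<And>g. g \<in> carrier G \<Longrightarrow> norm (u g) \<le> K"
proof -
  obtain K where "\<And>g. g \<in> carrier G \<Longrightarrow> norm (u g) \<le> K"
    using u_space unfolding G_space_def by blast
  then show ?thesis
    using that[of "max K 0"] by (simp add: le_max_iff_disj)
qed

lemma norm_v_bound: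
  obtains K where "0 \<le> K" and "\<And>g. g \<in> carrier G \<Longrightarrow> norm (v g) \<le> K"
proof -
  obtain K where "\<And>g. g \<in> carrier G \<Longrightarrow> norm (v g) \<le> K"
    using v_space unfolding G_space_def by blast
  then show ?thesis
    using that[of "max K 0"] by (simp add: le_max_iff_disj)
qed

lemma centralizer_bound:
  obtains C where "0 \<le> C"
    and "\<And>g y. g \<in> carrier G \<Longrightarrow> y \<in> Y00 \<Longrightarrow> in_X_le \<iota> (U g (\<Omega> y) - \<Omega> (v g y)) (C * norm y)"
proof -
  obtain C where "\<And>g y. g \<in> carrier G \<Longrightarrow> y \<in> Y00 \<Longrightarrow> in_X_le \<iota> (U g (\<Omega> y) - \<Omega> (v g y)) (C * norm y)"
    using centralizer unfolding G_centralizer_def by blast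
  then show ?thesis
    using that[of "\<bar>C\<bar>"] by (simp add: in_X_le_abs_const)
qed

lemma quasi_additive_bound:
  obtains C where "0 \<le> C"
    and "\<And>y y'. y \<in> Y00 \<Longrightarrow> y' \<in> Y00 \<Longrightarrow> in_X_le \<iota> (\<Omega> (y + y') - \<Omega> y - \<Omega> y') (C * (norm y + norm y'))"
proof -
  obtain C where "\<And>y y'. y \<in> Y00 \<Longrightarrow> y' \<in> Y00 \<Longrightarrow> in_X_le \<iota> (\<Omega> (y + y') - \<Omega> y - \<Omega> y') (C * (norm y + norm y'))"
    using quasi unfolding quasi_linear_def by blast
  then show ?thesis
    using that[of "\<bar>C\<bar>"] by (simp add: in_X_le_abs_const)
qed

definition defect :: "'g \<Rightarrow> 'y \<Rightarrow> 'x" where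
  "defect g y = inv_into UNIV \<iota> (U g (\<Omega> (v (inv g) y)) - U \<one> (\<Omega> y))"

lemma defect_in_X:
  obtains C where "0 \<le> C" and "\<And>g y. g \<in> carrier G \<Longrightarrow> y \<in> Y00 \<Longrightarrow>
    in_X_le \<iota> (U g (\<Omega> (v (inv g) y)) - U \<one> (\<Omega> y)) (C * norm y)"
proof -
  obtain Ku where Ku: "0 \<le> Ku" "\<And>g. g \<in> carrier G \<Longrightarrow> norm (u g) \<le> Ku"
    using norm_u_bound by blast
  obtain Cc where Cc: "0 \<le> Cc"
    "\<And>g y. g \<in> carrier G \<Longrightarrow> y \<in> Y00 \<Longrightarrow> in_X_le \<iota> (U g (\<Omega> y) - \<Omega> (v g y)) (Cc * norm y)"
    using centralizer_bound by blast
  have "in_X_le \<iota> (U g (\<Omega> (v (inv g) y)) - U \<one> (\<Omega> y)) (Ku * (Cc * norm y))"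
    if g: "g \<in> carrier G" and y: "y \<in> Y00" for g y
  proof -
    have "U g (\<Omega> (v (inv g) y)) - U \<one> (\<Omega> y) = U g (- (U (inv g) (\<Omega> y) - \<Omega> (v (inv g) y)))"
      using g U_mult[of g "inv g"] by (simp add: linear_diff linear_neg U_linear)
    also have "in_X_le \<iota> \<dots> (Ku * (Cc * norm y))"
      using g y
      by (intro in_X_le_map[where \<iota> = \<iota> and T = "U g" and S = "u g", OF U_embed[OF g]] Ku
          in_X_le_uminus[OF \<iota>_linear] Cc) simp_all
    finally show ?thesis .
  qed
  then show ?thesis
    using that[of "Ku * Cc"] Ku Cc by (simp add: mult.assoc)
qed

lemma \<iota>_defect: "g \<in> carrier G \<Longrightarrow> y \<in> Y00 \<Longrightarrow> \<iota> (defect g y) = U g (\<Omega> (v (inv g) y)) - U \<one> (\<Omega> y)"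
  unfolding defect_def by (metis defect_in_X in_X_le_inv_into(1)[OF \<iota>_inj])

lemma norm_defect_bound:
  obtains C where "0 \<le> C" and "\<And>g y. g \<in> carrier G \<Longrightarrow> y \<in> Y00 \<Longrightarrow> norm (defect g y) \<le> C * norm y"
proof -
  obtain C where C: "0 \<le> C" "\<And>g y. g \<in> carrier G \<Longrightarrow> y \<in> Y00 \<Longrightarrow>
      in_X_le \<iota> (U g (\<Omega> (v (inv g) y)) - U \<one> (\<Omega> y)) (C * norm y)"
    using defect_in_X by blast
  show ?thesis
  proof (rule that[OF C(1)])
    show "norm (defect g y) \<le> C * norm y" if "g \<in> carrier G" "y \<in> Y00" for g y
      unfolding defect_def using C(2)[OF that] by (rule in_X_le_inv_into(2)[OF \<iota>_inj])
  qed
qed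

lemma bounded_defect: "y \<in> Y00 \<Longrightarrow> bounded ((\<lambda>g. defect g y) ` carrier G)"
  unfolding bounded_iff by (rule norm_defect_bound) auto

lemma defect_lincomb:
  assumes H: "\<And>w w'. w \<in> Y00 \<Longrightarrow> w' \<in> Y00 \<Longrightarrow> \<Omega> (a *\<^sub>R w + b *\<^sub>R w') = a *\<^sub>R \<Omega> w + b *\<^sub>R \<Omega> w'"
    and g: "g \<in> carrier G" and y: "y \<in> Y00" "y' \<in> Y00"
  shows "defect g (a *\<^sub>R y + b *\<^sub>R y') = a *\<^sub>R defect g y + b *\<^sub>R defect g y'"
proof -
  have ig: "inv g \<in> carrier G" using g by simp
  have z: "a *\<^sub>R y + b *\<^sub>R y' \<in> Y00"
    using y Y00_subspace by (simp add: subspace_add subspace_scale)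
  have "\<Omega> (v (inv g) (a *\<^sub>R y + b *\<^sub>R y')) = a *\<^sub>R \<Omega> (v (inv g) y) + b *\<^sub>R \<Omega> (v (inv g) y')"
    using H[OF Y00_invariant[OF ig y(1)] Y00_invariant[OF ig y(2)]]
    by (simp add: blinfun.add_right blinfun.scaleR_right)
  then have "\<iota> (defect g (a *\<^sub>R y + b *\<^sub>R y')) = a *\<^sub>R \<iota> (defect g y) + b *\<^sub>R \<iota> (defect g y')"
    using g y z H[OF y] by (simp add: \<iota>_defect linear_add linear_scale U_linear algebra_simps)
  also have "\<dots> = \<iota> (a *\<^sub>R defect g y + b *\<^sub>R defect g y')"
    by (simp add: linear_add linear_scale \<iota>_linear)
  finally show ?thesis
    using \<iota>_inj by (simp add: inj_eq)
qed

lemma defect_translate: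
  assumes h: "h \<in> carrier G" and g: "g \<in> carrier G" and y: "y \<in> Y00"
    and c: "\<iota> c = U h (\<Omega> y) - U \<one> (\<Omega> (v h y))"
  shows "defect (h \<otimes> g) (v h y) = u h (defect g y) + c"
proof -
  have "v (inv (h \<otimes> g)) (v h y) = v (inv g) y"
    using h g by (simp add: v_mult[symmetric] inv_mult_group m_assoc)
  then have "\<iota> (defect (h \<otimes> g) (v h y)) = U h (U g (\<Omega> (v (inv g) y))) - U \<one> (\<Omega> (v h y))"
    using h g y by (simp add: \<iota>_defect Y00_invariant U_mult)
  also have "\<dots> = U h (\<iota> (defect g y)) + \<iota> c"
    using h g y c by (simp add: \<iota>_defect linear_diff U_linear U_one_right)
  also have "\<dots> = \<iota> (u h (defect g y) + c)"
    using h by (simp add: U_embed linear_add \<iota>_linear)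
  finally show ?thesis
    using \<iota>_inj by (simp add: inj_eq)
qed

lemma centralizer_correction:
  assumes h: "h \<in> carrier G" and y: "y \<in> Y00"
  obtains c where "\<iota> c = U h (\<Omega> y) - U \<one> (\<Omega> (v h y))"
proof -
  obtain C where C: "0 \<le> C"
    "\<And>g y. g \<in> carrier G \<Longrightarrow> y \<in> Y00 \<Longrightarrow> in_X_le \<iota> (U g (\<Omega> y) - \<Omega> (v g y)) (C * norm y)"
    using centralizer_bound by blast
  obtain x where x: "\<iota> x = U h (\<Omega> y) - \<Omega> (v h y)"
    using C(2)[OF h y] unfolding in_X_le_def by blast
  have "\<iota> (u \<one> x) = U \<one> (U h (\<Omega> y)) - U \<one> (\<Omega> (v h y))"
    by (simp add: U_embed[symmetric] x linear_diff U_linear)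
  then show ?thesis
    using h by (intro that) (simp add: U_one_left)
qed

lemma P_weak_star_mean_affine:
  assumes h: "h \<in> carrier G" and f: "bounded (f ` carrier G)"
  shows "P (weak_star_mean m (\<lambda>g. u h (f g) + c)) = u h (P (weak_star_mean m f)) + c"
proof -
  have "P (dual_map (dual_map (u h)) M) = u h (P M)" for M
    using P_equivariant[OF h] by (metis blinfun_apply_blinfun_compose)
  then show ?thesis
    by (simp add: weak_star_mean_affine[OF mean f] blinfun.add_right P_bidual_embed)
qed

text \<open>The action of \<open>\<one>\<close> is only idempotent, so \<open>\<Omega>\<close> and \<open>U \<one> \<circ> \<Omega>\<close> may differ by an unbounded
  amount; the first two summands, which every \<open>U g\<close> annihilates, compensate for this on the range
  of \<open>id - v \<one>\<close>.\<close>

definition averaged :: "'y \<Rightarrow> 'z" where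
  "averaged y = \<Omega> (y - v \<one> y) - U \<one> (\<Omega> (y - v \<one> y)) + U \<one> (\<Omega> y)
     + \<iota> (P (weak_star_mean m (\<lambda>g. defect g y)))"

lemma averaged_lincomb:
  assumes H: "\<And>w w'. w \<in> Y00 \<Longrightarrow> w' \<in> Y00 \<Longrightarrow> \<Omega> (a *\<^sub>R w + b *\<^sub>R w') = a *\<^sub>R \<Omega> w + b *\<^sub>R \<Omega> w'"
    and y: "y \<in> Y00" "y' \<in> Y00"
  shows "averaged (a *\<^sub>R y + b *\<^sub>R y') = a *\<^sub>R averaged y + b *\<^sub>R averaged y'"
proof -
  let ?z = "a *\<^sub>R y + b *\<^sub>R y'"
  have z: "?z \<in> Y00"
    using y Y00_subspace by (simp add: subspace_add subspace_scale)
  have "?z - v \<one> ?z = a *\<^sub>R (y - v \<one> y) + b *\<^sub>R (y' - v \<one> y')"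
    by (simp add: blinfun.add_right blinfun.scaleR_right algebra_simps)
  moreover have "y - v \<one> y \<in> Y00" "y' - v \<one> y' \<in> Y00"
    using y Y00_invariant Y00_subspace by (simp_all add: subspace_diff)
  ultimately have kernel_part: "\<Omega> (?z - v \<one> ?z) = a *\<^sub>R \<Omega> (y - v \<one> y) + b *\<^sub>R \<Omega> (y' - v \<one> y')"
    using H by simp
  have "weak_star_mean m (\<lambda>g. defect g ?z) = weak_star_mean m (\<lambda>g. a *\<^sub>R defect g y + b *\<^sub>R defect g y')"
    using bounded_defect[OF z] by (rule weak_star_mean_cong[OF mean]) (simp add: defect_lincomb H y)
  also have "\<dots> = a *\<^sub>R weak_star_mean m (\<lambda>g. defect g y) + b *\<^sub>R weak_star_mean m (\<lambda>g. defect g y')"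
    using y by (simp add: weak_star_mean_lincomb[OF mean] bounded_defect)
  finally have mean_part: "weak_star_mean m (\<lambda>g. defect g ?z)
      = a *\<^sub>R weak_star_mean m (\<lambda>g. defect g y) + b *\<^sub>R weak_star_mean m (\<lambda>g. defect g y')" .
  show ?thesis
    unfolding averaged_def kernel_part mean_part H[OF y]
    by (simp add: U_linear linear_add linear_scale \<iota>_linear linear_diff blinfun.add_right blinfun.scaleR_right
        algebra_simps)
qed

lemma averaged_homogeneous: "homogeneous_on Y00 averaged"
  unfolding homogeneous_on_def
proof (intro allI ballI)
  fix r y assume y: "y \<in> Y00"
  have "\<Omega> (r *\<^sub>R w + 0 *\<^sub>R w') = r *\<^sub>R \<Omega> w + 0 *\<^sub>R \<Omega> w'" if "w \<in> Y00" for w w'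
    using quasi that unfolding quasi_linear_def homogeneous_on_def by simp
  from averaged_lincomb[OF this y y] show "averaged (r *\<^sub>R y) = r *\<^sub>R averaged y"
    by simp
qed

lemma averaged_linear_on: "linear_on Y00 \<Omega> \<Longrightarrow> linear_on Y00 averaged"
  unfolding linear_on_def using averaged_lincomb by blast

lemma averaged_equivariant: "G_equivariant_map G U v Y00 averaged"
  unfolding G_equivariant_map_def
proof (intro ballI)
  fix h y assume h: "h \<in> carrier G" and y: "y \<in> Y00"
  obtain c where c: "\<iota> c = U h (\<Omega> y) - U \<one> (\<Omega> (v h y))"
    using centralizer_correction[OF h y] .
  have "weak_star_mean m (\<lambda>g. defect g (v h y)) = weak_star_mean m (\<lambda>g. defect (h \<otimes> g) (v h y))"
    using weak_star_mean_translate[OF mean h bounded_defect[OF Y00_invariant[OF h y]]] by simp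
  also have "\<dots> = weak_star_mean m (\<lambda>g. u h (defect g y) + c)"
  proof (rule weak_star_mean_cong[OF mean])
    show "bounded ((\<lambda>g. defect (h \<otimes> g) (v h y)) ` carrier G)"
      using h by (intro bounded_subset[OF bounded_defect[OF Y00_invariant[OF h y]]]) auto
  qed (use h y c in \<open>simp add: defect_translate\<close>)
  finally have "P (weak_star_mean m (\<lambda>g. defect g (v h y))) = u h (P (weak_star_mean m (\<lambda>g. defect g y))) + c"
    using h y by (simp add: P_weak_star_mean_affine bounded_defect)
  then show "U h (averaged y) = averaged (v h y)"
    unfolding averaged_def using h c
    by (simp add: v_one_left \<Omega>_zero U_linear linear_add linear_diff linear_0 U_one_right U_embed \<iota>_linear)
qed

lemma \<Omega>_minus_averaged:
  "\<Omega> y - averaged y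
    = (\<Omega> y - \<Omega> (y - v \<one> y) - \<Omega> (v \<one> y)) - U \<one> (\<Omega> y - \<Omega> (y - v \<one> y) - \<Omega> (v \<one> y))
      - (U \<one> (\<Omega> (v \<one> y)) - \<Omega> (v \<one> y)) - \<iota> (P (weak_star_mean m (\<lambda>g. defect g y)))"
  unfolding averaged_def by (simp add: linear_diff U_linear)

lemma averaged_bounded_distance: "bounded_distance \<iota> Y00 \<Omega> averaged"
proof -
  obtain Ku where Ku: "0 \<le> Ku" "\<And>g. g \<in> carrier G \<Longrightarrow> norm (u g) \<le> Ku"
    using norm_u_bound by blast
  obtain Kv where Kv: "0 \<le> Kv" "\<And>g. g \<in> carrier G \<Longrightarrow> norm (v g) \<le> Kv"
    using norm_v_bound by blast
  obtain C0 where C0: "0 \<le> C0" "\<And>y y'. y \<in> Y00 \<Longrightarrow> y' \<in> Y00 \<Longrightarrow>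
      in_X_le \<iota> (\<Omega> (y + y') - \<Omega> y - \<Omega> y') (C0 * (norm y + norm y'))"
    using quasi_additive_bound by blast
  obtain Cc where Cc: "0 \<le> Cc" "\<And>g y. g \<in> carrier G \<Longrightarrow> y \<in> Y00 \<Longrightarrow>
      in_X_le \<iota> (U g (\<Omega> y) - \<Omega> (v g y)) (Cc * norm y)"
    using centralizer_bound by blast
  obtain Cd where Cd: "0 \<le> Cd" "\<And>g y. g \<in> carrier G \<Longrightarrow> y \<in> Y00 \<Longrightarrow> norm (defect g y) \<le> Cd * norm y"
    using norm_defect_bound by blast
  have "in_X_le \<iota> (\<Omega> y - averaged y) ((C0 * (1 + 2 * Kv) * (1 + Ku) + Cc * Kv + norm P * Cd) * norm y)"
    if y: "y \<in> Y00" for y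
  proof -
    define b where "b = v \<one> y"
    define a where "a = y - b"
    have ab: "a \<in> Y00" "b \<in> Y00" "a + b = y" "v \<one> b = b"
      using y Y00_subspace Y00_invariant[of \<one> y] v_one_left[of \<one> y]
      by (simp_all add: a_def b_def subspace_diff)
    have norm_b: "norm b \<le> Kv * norm y"
      unfolding b_def using norm_blinfun[of "v \<one>" y] mult_right_mono[OF Kv(2), of \<one> "norm y"]
      by simp
    have "norm a + norm b \<le> (1 + 2 * Kv) * norm y"
      using norm_triangle_ineq4[of y b] norm_b unfolding a_def by (simp add: algebra_simps)
    then have q1: "in_X_le \<iota> (\<Omega> y - \<Omega> a - \<Omega> b) (C0 * ((1 + 2 * Kv) * norm y))"
      using C0(2)[OF ab(1,2)] ab(3) C0(1) by (auto elim: in_X_le_mono intro: mult_left_mono)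
    have q2: "in_X_le \<iota> (U \<one> (\<Omega> b) - \<Omega> b) (Cc * (Kv * norm y))"
      using Cc(2)[of \<one> b] ab(2,4) Cc(1) norm_b by (auto elim: in_X_le_mono intro: mult_left_mono)
    have "norm (P (weak_star_mean m (\<lambda>g. defect g y))) \<le> norm P * (Cd * norm y)"
      using Cd y by (intro order_trans[OF norm_blinfun] mult_left_mono norm_weak_star_mean_le[OF mean]) auto
    then have q3: "in_X_le \<iota> (\<iota> (P (weak_star_mean m (\<lambda>g. defect g y)))) (norm P * (Cd * norm y))"
      unfolding in_X_le_def by blast
    have "\<Omega> y - averaged y = (\<Omega> y - \<Omega> a - \<Omega> b) - U \<one> (\<Omega> y - \<Omega> a - \<Omega> b) - (U \<one> (\<Omega> b) - \<Omega> b)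
        - \<iota> (P (weak_star_mean m (\<lambda>g. defect g y)))"
      unfolding a_def b_def by (rule \<Omega>_minus_averaged)
    also have "in_X_le \<iota> \<dots> (C0 * ((1 + 2 * Kv) * norm y) + Ku * (C0 * ((1 + 2 * Kv) * norm y))
        + Cc * (Kv * norm y) + norm P * (Cd * norm y))"
      by (intro in_X_le_diff[OF \<iota>_linear] in_X_le_map[where \<iota> = \<iota> and T = "U \<one>" and S = "u \<one>"]
          q1 q2 q3 U_embed Ku(2)) simp_all
    finally show ?thesis
      by (simp add: algebra_simps)
  qed
  then show ?thesis
    unfolding bounded_distance_def by blast
qed

lemma averaged_quasi_linear: "quasi_linear \<iota> Y00 averaged"
  using \<iota>_linear Y00_subspace averaged_homogeneous quasi averaged_bounded_distance
  by (rule bounded_distance_quasi_linear)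

end

theorem mainTheorem2:
  fixes G :: "('g, 'b) monoid_scheme"
    and u :: "'g \<Rightarrow> ('x::banach \<Rightarrow>\<^sub>L 'x)"
    and v :: "'g \<Rightarrow> ('y::banach \<Rightarrow>\<^sub>L 'y)"
    and \<iota> :: "'x \<Rightarrow> 'z::real_vector"
    and U :: "'g \<Rightarrow> 'z \<Rightarrow> 'z"
    and Y00 :: "'y set"
    and \<Omega> :: "'y \<Rightarrow> 'z"
  assumes "amenable G"
    and "G_space G u" and "G_space G v"
    and "G_complemented_in_bidual G u"
    and "extended_action G u \<iota> U"
    and "admissible_domain G v Y00"
    and "quasi_linear \<iota> Y00 \<Omega>"
    and "G_centralizer G \<iota> U v Y00 \<Omega>"
  shows "(\<exists>\<omega>. quasi_linear \<iota> Y00 \<omega> \<and> G_equivariant_map G U v Y00 \<omega> \<and> bounded_distance \<iota> Y00 \<Omega> \<omega>)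
       \<and> (linear_on Y00 \<Omega> \<longrightarrow>
          (\<exists>\<omega>. quasi_linear \<iota> Y00 \<omega> \<and> linear_on Y00 \<omega> \<and> G_equivariant_map G U v Y00 \<omega>
               \<and> bounded_distance \<iota> Y00 \<Omega> \<omega>))"
proof -
  obtain m where "group G" and "left_invariant_mean G m"
    using assms(1) unfolding amenable_def by blast
  moreover obtain P :: "(('x \<Rightarrow>\<^sub>L real) \<Rightarrow>\<^sub>L real) \<Rightarrow>\<^sub>L 'x" where "\<And>x. P (bidual_embed x) = x"
    and "\<And>g. g \<in> carrier G \<Longrightarrow> P o\<^sub>L dual_map (dual_map (u g)) = u g o\<^sub>L P"
    using assms(4) unfolding G_complemented_in_bidual_def by blast
  ultimately interpret amenable_averaging G m u v \<iota> U Y00 \<Omega> P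
    using assms(2,3,5-8) unfolding admissible_domain_def
    by (intro amenable_averaging.intro amenable_averaging_axioms.intro) auto
  show ?thesis
    using averaged_quasi_linear averaged_linear_on averaged_equivariant averaged_bounded_distance by blast
qed

end
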